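(* A ring $R$ is CSNC if and only if (1) $2\in\mathrm{Nil}(R)$, and (2) for every clean element $a\in R$ there exists an integer $k\ge 0$ such that $a^{2^k}$ is strongly nil-clean.
   Context: All rings are associative with identity $1$. For a ring $R$, $\mathrm{Id}(R)$, $U(R)$, $\mathrm{Nil}(R)$ denote the sets of idempotents, units and nilpotent elements. An element $a\in R$ is clean if $a=e+u$ for some $e\in\mathrm{Id}(R)$, $u\in U(R)$. An element $a$ is strongly nil-clean if $a=e+q$ with $e\in \mathrm{Id}(R)$, $q\in\mathrm{Nil}(R)$ and $eq=qe$. A ring $R$ is called CSNC if every clean element of $R$ is strongly nil-clean. *)

theory Defs
  imports Main
begin

definition idem :: "'a::ring_1 \<Rightarrow> bool" where
  "idem e \<longleftrightarrow> e * e = e"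

definition unit_elem :: "'a::ring_1 \<Rightarrow> bool" where
  "unit_elem u \<longleftrightarrow> (\<exists>v. u * v = 1 \<and> v * u = 1)"

definition nilpotent :: "'a::ring_1 \<Rightarrow> bool" where
  "nilpotent q \<longleftrightarrow> (\<exists>n::nat. q ^ n = 0)"

definition clean :: "'a::ring_1 \<Rightarrow> bool" where
  "clean a \<longleftrightarrow> (\<exists>e u. idem e \<and> unit_elem u \<and> a = e + u)"

definition strongly_nil_clean :: "'a::ring_1 \<Rightarrow> bool" where
  "strongly_nil_clean a \<longleftrightarrow> (\<exists>e q. idem e \<and> nilpotent q \<and> e * q = q * e \<and> a = e + q)"

definition CSNC :: "'a::ring_1 itself \<Rightarrow> bool" where
  "CSNC _ \<longleftrightarrow> (\<forall>a::'a. clean a \<longrightarrow> strongly_nil_clean a)"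

end

theory Submission
  imports Defs
begin

text \<open>
  An element \<open>a\<close> is strongly nil-clean exactly when \<open>a - a\<^sup>2\<close> is nilpotent: one direction is a
  direct computation, the other lifts the idempotent \<open>a\<close> modulo the nilpotent \<open>a - a\<^sup>2\<close> by the
  Newton iteration \<open>e \<mapsto> 3e\<^sup>2 - 2e\<^sup>3\<close>, which stays inside the bicommutant of \<open>a\<close>, a
  commutative subring containing \<open>a\<close>. If \<open>2\<close> is nilpotent, then \<open>(a - a\<^sup>2)\<^sup>2 = (a\<^sup>2 - a\<^sup>4) + 2(a\<^sup>2 - a\<^sup>3)\<close> shows that
  nilpotency of \<open>a\<^sup>2 - a\<^sup>4\<close> descends to \<open>a - a\<^sup>2\<close>, so strong nil-cleanness descends from
  \<open>a^(2^k)\<close> to \<open>a\<close>. Conversely \<open>-1 = 0 + (-1)\<close> is clean, and if it is strongly nil-clean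
  then \<open>-1 - (-1)\<^sup>2 = -2\<close> is nilpotent.
\<close>

lemma power_mult_distrib_commuting:
  fixes x y :: "'a::monoid_mult"
  assumes "x * y = y * x"
  shows "(x * y) ^ n = x ^ n * y ^ n"
proof (induction n)
  case 0
  show ?case by simp
next
  case (Suc n)
  have "y ^ n * x = x * y ^ n"
    using power_commuting_commutes[of y x n] assms by simp
  then have "(x * y) ^ n * (x * y) = x ^ n * x * (y ^ n * y)"
    by (metis Suc mult.assoc)
  then show ?case by (simp only: power_Suc2)
qed

definition bicommutant :: "'a::ring_1 set \<Rightarrow> 'a set" where
  "bicommutant S = {z. \<forall>w. (\<forall>s\<in>S. w * s = s * w) \<longrightarrow> w * z = z * w}"

lemma bicommutant_one [simp]: "1 \<in> bicommutant S"
  unfolding bicommutant_def by simp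

lemma bicommutant_zero [simp]: "0 \<in> bicommutant S"
  unfolding bicommutant_def by simp

lemma bicommutant_numeral [simp]: "numeral n \<in> bicommutant S"
  unfolding bicommutant_def by (intro CollectI allI impI) (metis of_nat_numeral mult_of_nat_commute)

lemma bicommutant_add [simp]:
  "y \<in> bicommutant S \<Longrightarrow> z \<in> bicommutant S \<Longrightarrow> y + z \<in> bicommutant S"
  unfolding bicommutant_def by (simp add: distrib_left distrib_right)

lemma bicommutant_uminus [simp]: "y \<in> bicommutant S \<Longrightarrow> - y \<in> bicommutant S"
  unfolding bicommutant_def by simp

lemma bicommutant_diff [simp]:
  "y \<in> bicommutant S \<Longrightarrow> z \<in> bicommutant S \<Longrightarrow> y - z \<in> bicommutant S"
  unfolding bicommutant_def by (simp add: left_diff_distrib right_diff_distrib)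

lemma bicommutant_mult [simp]:
  assumes "y \<in> bicommutant S" and "z \<in> bicommutant S"
  shows "y * z \<in> bicommutant S"
  unfolding bicommutant_def
proof (intro CollectI allI impI)
  fix w
  assume "\<forall>s\<in>S. w * s = s * w"
  then have "w * y = y * w" and "w * z = z * w"
    using assms unfolding bicommutant_def by auto
  then show "w * (y * z) = y * z * w"
    by (metis mult.assoc)
qed

lemma bicommutant_power [simp]: "y \<in> bicommutant S \<Longrightarrow> y ^ n \<in> bicommutant S"
  by (induction n) simp_all

lemma mem_bicommutant:
  assumes "\<And>s t. s \<in> S \<Longrightarrow> t \<in> S \<Longrightarrow> s * t = t * s" and "s \<in> S"
  shows "s \<in> bicommutant S"
  unfolding bicommutant_def using assms by simp

text \<open>The bicommutant of a set of pairwise commuting elements is commutative: each element of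
  \<open>S\<close>, hence each element of the bicommutant, lies in the commutant of \<open>S\<close>.\<close>

lemma bicommutant_commute:
  assumes "\<And>s t. s \<in> S \<Longrightarrow> t \<in> S \<Longrightarrow> s * t = t * s"
    and "y \<in> bicommutant S" and "z \<in> bicommutant S"
  shows "y * z = z * y"
proof -
  have "\<forall>s\<in>S. z * s = s * z"
    using assms(1,3) unfolding bicommutant_def by auto
  then show ?thesis
    using assms(2) unfolding bicommutant_def by auto
qed

lemma bicommutant_singleton_commute:
  "y \<in> bicommutant {a} \<Longrightarrow> z \<in> bicommutant {a} \<Longrightarrow> y * z = z * y"
  by (rule bicommutant_commute) auto

lemma mem_bicommutant_singleton [simp]: "a \<in> bicommutant {a}"
  by (rule mem_bicommutant) auto

lemma nilpotent_mult_commuting: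
  fixes x y :: "'a::ring_1"
  assumes "x * y = y * x" and "nilpotent x"
  shows "nilpotent (x * y)"
proof -
  obtain n where "x ^ n = 0"
    using assms(2) unfolding nilpotent_def by blast
  then have "(x * y) ^ n = 0"
    using power_mult_distrib_commuting[OF assms(1)] by simp
  then show ?thesis
    unfolding nilpotent_def by blast
qed

lemma nilpotent_uminus:
  fixes x :: "'a::ring_1"
  assumes "nilpotent x"
  shows "nilpotent (- x)"
  using nilpotent_mult_commuting[of x "-1"] assms by simp

lemma nilpotent_if_nilpotent_square:
  fixes x :: "'a::ring_1"
  assumes "nilpotent (x * x)"
  shows "nilpotent x"
proof -
  obtain n where "(x * x) ^ n = 0"
    using assms unfolding nilpotent_def by blast
  then have "x ^ (2 * n) = 0"
    by (simp add: power_mult power2_eq_square)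
  then show ?thesis
    unfolding nilpotent_def by blast
qed

lemma nilpotent_add_commuting:
  fixes y z :: "'a::ring_1"
  assumes yz: "y * z = z * y" and "nilpotent y" and "nilpotent z"
  shows "nilpotent (y + z)"
proof -
  let ?B = "bicommutant {y, z}"
  have comm: "u * v = v * u" if "u \<in> ?B" "v \<in> ?B" for u v
    by (rule bicommutant_commute[OF _ that]) (use yz in auto)
  have y_B: "y \<in> ?B" and z_B: "z \<in> ?B"
    by (auto intro: mem_bicommutant simp: yz)
  have expansion: "\<exists>c\<in>?B. (y + z) ^ k = y ^ k + z * c" for k
  proof (induction k)
    case 0
    show ?case by (rule bexI[of _ 0]) simp_all
  next
    case (Suc k)
    then obtain c where c: "c \<in> ?B" "(y + z) ^ k = y ^ k + z * c" by blast
    have "y ^ k * z = z * y ^ k"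
      using comm y_B z_B by simp
    have "(y + z) ^ Suc k = (y ^ k + z * c) * (y + z)"
      by (simp only: power_Suc2 c(2))
    also have "\<dots> = y ^ k * y + z * (y ^ k + c * (y + z))"
      using \<open>y ^ k * z = z * y ^ k\<close> by (simp add: distrib_left distrib_right mult.assoc add.assoc)
    finally have "(y + z) ^ Suc k = y ^ Suc k + z * (y ^ k + c * (y + z))"
      by (simp only: power_Suc2)
    moreover have "y ^ k + c * (y + z) \<in> ?B"
      using c(1) y_B z_B by simp
    ultimately show ?case by blast
  qed
  obtain m n where "y ^ m = 0" and "z ^ n = 0"
    using assms(2,3) unfolding nilpotent_def by blast
  moreover obtain c where "c \<in> ?B" and "(y + z) ^ m = y ^ m + z * c"
    using expansion by blast
  ultimately have "(y + z) ^ (m * n) = z ^ n * c ^ n"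
    using comm z_B by (simp add: power_mult power_mult_distrib_commuting)
  then show ?thesis
    using \<open>z ^ n = 0\<close> unfolding nilpotent_def by auto
qed

lemma nilpotent_diff_square_if_strongly_nil_clean:
  fixes a :: "'a::ring_1"
  assumes "strongly_nil_clean a"
  shows "nilpotent (a - a * a)"
proof -
  obtain e q where "e * e = e" and "nilpotent q" and "e * q = q * e" and "a = e + q"
    using assms unfolding strongly_nil_clean_def idem_def by blast
  have "a - a * a = q * (1 - e - e - q)"
    unfolding \<open>a = e + q\<close> using \<open>e * e = e\<close> \<open>e * q = q * e\<close>
    by (simp add: algebra_simps)
  moreover have "q * (1 - e - e - q) = (1 - e - e - q) * q"
    using \<open>e * q = q * e\<close> by (simp add: algebra_simps)
  ultimately show ?thesis
    using nilpotent_mult_commuting \<open>nilpotent q\<close> by metis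
qed

lemma newton_idempotent_step:
  fixes e :: "'a::ring_1"
  defines "f \<equiv> 3 * e * e - 2 * e * e * e"
  shows "f * f - f = (e * e - e)\<^sup>2 * (4 * (e * e - e) - 3)"
    and "f - e = (e * e - e) * (1 - 2 * e)"
  \<comment> \<open>numerals are expanded into sums of \<open>1\<close>, since the simplifier only collects numeral
    coefficients in commutative rings\<close>
  unfolding f_def numeral_Bit0 numeral_Bit1 numeral_One power2_eq_square
  by (simp_all add: algebra_simps del: one_add_one)

lemma strongly_nil_clean_if_nilpotent_diff_square:
  fixes a :: "'a::ring_1"
  assumes "nilpotent (a - a * a)"
  shows "strongly_nil_clean a"
proof -
  let ?B = "bicommutant {a}"
  have comm: "y * z = z * y" if "y \<in> ?B" "z \<in> ?B" for y z
    using that by (rule bicommutant_singleton_commute)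
  define x where "x = a - a * a"
  have x_B: "x \<in> ?B"
    unfolding x_def by simp
  have newton: "\<exists>e\<in>?B. \<exists>c\<in>?B. \<exists>d\<in>?B. e * e - e = x ^ Suc k * d \<and> e - a = x * c" for k
  proof (induction k)
    case 0
    show ?case
      by (rule bexI[of _ a], rule bexI[of _ 0], rule bexI[of _ "-1"]) (simp_all add: x_def)
  next
    case (Suc k)
    then obtain e c d where B: "e \<in> ?B" "c \<in> ?B" "d \<in> ?B"
      and idem_err: "e * e - e = x ^ Suc k * d" and dist: "e - a = x * c"
      by blast
    define f where "f = 3 * e * e - 2 * e * e * e"
    have "x ^ Suc k * d = d * x ^ Suc k"
      using x_B B by (intro comm) simp_all
    then have "(x ^ Suc k * d)\<^sup>2 = (x ^ Suc k)\<^sup>2 * d\<^sup>2"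
      by (rule power_mult_distrib_commuting)
    also have "\<dots> = x ^ Suc (Suc k) * (x ^ k * d\<^sup>2)"
      by (simp only: power_mult[symmetric] mult.assoc[symmetric] power_add[symmetric])
        (simp add: mult_2_right)
    finally have square: "(x ^ Suc k * d)\<^sup>2 = x ^ Suc (Suc k) * (x ^ k * d\<^sup>2)" .
    have "f * f - f = (e * e - e)\<^sup>2 * (4 * (e * e - e) - 3)"
      unfolding f_def by (rule newton_idempotent_step(1))
    also have "\<dots> = x ^ Suc (Suc k) * (x ^ k * d\<^sup>2 * (4 * (e * e - e) - 3))"
      by (simp only: idem_err square mult.assoc)
    finally have f_idem_err: "f * f - f = x ^ Suc (Suc k) * (x ^ k * d\<^sup>2 * (4 * (e * e - e) - 3))" .
    have "f - a = (f - e) + (e - a)"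
      by simp
    also have "\<dots> = x ^ Suc k * d * (1 - 2 * e) + x * c"
      unfolding f_def newton_idempotent_step(2) idem_err dist ..
    also have "\<dots> = x * (x ^ k * d * (1 - 2 * e) + c)"
      by (simp only: power_Suc distrib_left mult.assoc)
    finally have f_dist: "f - a = x * (x ^ k * d * (1 - 2 * e) + c)" .
    have "f \<in> ?B" "x ^ k * d * (1 - 2 * e) + c \<in> ?B"
      "x ^ k * d\<^sup>2 * (4 * (e * e - e) - 3) \<in> ?B"
      using B x_B by (simp_all add: f_def)
    with f_idem_err f_dist show ?case
      by blast
  qed
  obtain n where "x ^ n = 0"
    using assms unfolding nilpotent_def x_def by blast
  then obtain e c where B: "e \<in> ?B" "c \<in> ?B" and "e * e = e" and dist: "e - a = x * c"
    using newton[of n] by auto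
  define q where "q = x * - c"
  have "x * - c = - c * x"
    using x_B B by (intro comm) simp_all
  then have "nilpotent q"
    unfolding q_def by (rule nilpotent_mult_commuting) (use assms in \<open>simp add: x_def\<close>)
  moreover have "e * q = q * e"
    using B x_B unfolding q_def by (intro comm) simp_all
  moreover have "a = e + q"
    using dist unfolding q_def by (simp add: algebra_simps)
  ultimately show ?thesis
    using \<open>e * e = e\<close> unfolding strongly_nil_clean_def idem_def by blast
qed

lemma strongly_nil_clean_iff_nilpotent_diff_square:
  "strongly_nil_clean a \<longleftrightarrow> nilpotent (a - a * a)"
  using nilpotent_diff_square_if_strongly_nil_clean strongly_nil_clean_if_nilpotent_diff_square
  by blast

lemma nilpotent_diff_square_if_nilpotent_diff_square_square:
  fixes b :: "'a::ring_1"
  assumes "nilpotent (2 :: 'a)" and "nilpotent (b * b - b * b * (b * b))"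
  shows "nilpotent (b - b * b)"
proof -
  define u where "u = b * b - b * b * (b * b)"
  define w where "w = b * b - b * b * b"
  have "(b - b * b) * (b - b * b) = - u + 2 * w"
    unfolding u_def w_def mult_2 by (simp add: algebra_simps)
  moreover have "nilpotent (- u)"
    using assms(2) unfolding u_def by (rule nilpotent_uminus)
  moreover have "nilpotent (2 * w)"
    using assms(1) by (rule nilpotent_mult_commuting[rotated]) (simp add: mult_2 mult_2_right)
  moreover have "- u * (2 * w) = 2 * w * - u"
    by (rule bicommutant_singleton_commute[of _ b]) (simp_all add: u_def w_def)
  ultimately have "nilpotent ((b - b * b) * (b - b * b))"
    using nilpotent_add_commuting by metis
  then show ?thesis
    by (rule nilpotent_if_nilpotent_square)
qed

lemma strongly_nil_clean_if_strongly_nil_clean_power_two_pow: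
  fixes a :: "'a::ring_1"
  assumes "nilpotent (2 :: 'a)" and "strongly_nil_clean (a ^ 2 ^ k)"
  shows "strongly_nil_clean a"
  using assms(2)
proof (induction k)
  case 0
  then show ?case by simp
next
  case (Suc k)
  define b where "b = a ^ 2 ^ k"
  have "a ^ 2 ^ Suc k = b * b"
    by (simp only: b_def power_Suc mult_2 power_add)
  with Suc.prems have "nilpotent (b * b - b * b * (b * b))"
    by (simp only: strongly_nil_clean_iff_nilpotent_diff_square)
  then have "strongly_nil_clean b"
    unfolding strongly_nil_clean_iff_nilpotent_diff_square
    using assms(1) by (rule nilpotent_diff_square_if_nilpotent_diff_square_square[rotated])
  then show ?case
    unfolding b_def by (rule Suc.IH)
qed

lemma clean_minus_one: "clean (- 1 :: 'a::ring_1)"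
proof -
  have "idem (0 :: 'a)"
    unfolding idem_def by simp
  moreover have "unit_elem (- 1 :: 'a)"
    unfolding unit_elem_def by (rule exI[of _ "- 1"]) simp
  ultimately show ?thesis
    unfolding clean_def by force
qed

lemma nilpotent_two_if_strongly_nil_clean_minus_one:
  assumes "strongly_nil_clean (- 1 :: 'a::ring_1)"
  shows "nilpotent (2 :: 'a)"
proof -
  have "nilpotent (- 1 - (- 1) * (- 1) :: 'a)"
    using assms by (simp only: strongly_nil_clean_iff_nilpotent_diff_square)
  then have "nilpotent (- (- 1 - (- 1) * (- 1)) :: 'a)"
    by (rule nilpotent_uminus)
  then show ?thesis
    by simp
qed

theorem mainTheorem10:
  shows "CSNC TYPE('a::ring_1) \<longleftrightarrow>
    (nilpotent (2::'a) \<and>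
     (\<forall>a::'a. clean a \<longrightarrow> (\<exists>k::nat. strongly_nil_clean (a ^ (2 ^ k)))))"
proof
  assume "CSNC TYPE('a)"
  then have csnc: "strongly_nil_clean a" if "clean a" for a :: 'a
    using that unfolding CSNC_def by blast
  have "nilpotent (2 :: 'a)"
    using csnc[OF clean_minus_one] by (rule nilpotent_two_if_strongly_nil_clean_minus_one)
  moreover have "\<exists>k. strongly_nil_clean (a ^ 2 ^ k)" if "clean a" for a :: 'a
    using csnc[OF that] by (intro exI[of _ 0]) simp
  ultimately show "nilpotent (2::'a) \<and> (\<forall>a::'a. clean a \<longrightarrow> (\<exists>k. strongly_nil_clean (a ^ 2 ^ k)))"
    by blast
next
  assume "nilpotent (2::'a) \<and> (\<forall>a::'a. clean a \<longrightarrow> (\<exists>k. strongly_nil_clean (a ^ 2 ^ k)))"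
  then have "strongly_nil_clean a" if "clean a" for a :: 'a
    using that strongly_nil_clean_if_strongly_nil_clean_power_two_pow by metis
  then show "CSNC TYPE('a)"
    unfolding CSNC_def by blast
qed

end
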